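(* Let $f:\mathbb{R}^n\to\mathbb{R}$ be convex and continuously differentiable with locally Lipschitz gradient, with $\mathcal{X}^*:=\arg\min f\neq\emptyset$ and optimal value $f^*$. Fix $x^0\in\mathbb{R}^n$, $\alpha_0>0$, $\theta_0>0$, $\tau\ge1$, $0<\omega\le\frac1{\sqrt2}$, and $\gamma_k$ with $0<\gamma_{\min}\le\gamma_k\le\gamma_{\max}$, and generate $x^{k+1}=x^k-\alpha_k\gamma_k\nabla f(x^k)$ with, for $k\ge1$, $L_k:=\frac{\|\nabla f(x^k)-\nabla f(x^{k-1})\|}{\|x^k-x^{k-1}\|}$, $\alpha_k:=\min\{\frac{\alpha_{k-1}\gamma_{k-1}}{\gamma_k}\sqrt{2(1-\omega^2)+\theta_{k-1}/\tau},\frac{\omega}{\gamma_kL_k}\}$, $\theta_k:=\frac{\alpha_k\gamma_k}{\alpha_{k-1}\gamma_{k-1}}$. Let $\eta:=\mathrm{dist}^2(x^0;\mathcal{X}^* )+2\alpha_0^2\gamma_0^2\|\nabla f(x^0)\|^2+2\alpha_0\gamma_0\theta_0(f(x^0)-f^* )$ and let $R>\sqrt\eta+\mathrm{dist}(x^0;\mathcal{X}^* )+\|x^0\|$. Then: (a) $x^k\in B(0;R)$ (open ball) for all $k$; in particular $(x^k)$ is bounded; (b) $\sum_{k\ge0}\|\nabla f(x^k)\|^2<\infty$ and $\lim_{k\to\infty}\|\nabla f(x^k)\|=0$; (c) $(x^k)$ converges to an optimal solution $x^*\in B(0;R)$.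
   Context: This is the adaptive scaled gradient algorithm (AdaSGA). $\mathrm{dist}(x;S)=\inf_{z\in S}\|z-x\|$. *)

theory Defs
  imports "HOL-Analysis.Analysis"
begin

definition argmin_set :: "('a \<Rightarrow> real) \<Rightarrow> 'a set" where
  "argmin_set f = {x. \<forall>y. f x \<le> f y}"

definition locally_lipschitz :: "('a::metric_space \<Rightarrow> 'b::metric_space) \<Rightarrow> bool" where
  "locally_lipschitz g \<longleftrightarrow>
     (\<forall>x. \<exists>e>0. \<exists>L. \<forall>y\<in>ball x e. \<forall>z\<in>ball x e. dist (g y) (g z) \<le> L * dist y z)"

end

theory Submission
  imports Defs
begin

(* Write s_k = alpha_k gamma_k and c = 1 - omega^2. The step-size rule guarantees
   s_(k+1) |g(x_(k+1)) - g(x_k)| <= omega |x_(k+1) - x_k| and s_(k+1) theta_(k+1) <= s_k (2 c + theta_k).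
   Together with the gradient inequality of convexity these make, for every minimizer z,
     V_k(z) = c |x_(k+1) - z|^2 + omega^2 |x_(k+1) - x_k|^2 + s_(k+1) theta_(k+1) (f(x_k) - f(z))
   nonincreasing, with V_0(z) <= c eta(z). For the minimizer nearest to x_0 this keeps all iterates in a
   ball of radius B < R. On that compact ball g is Lipschitz, so the step sizes stay bounded away from 0,
   and cocoercivity of g at the minimizer adds a multiple of |g(x_(k+1))|^2 to the decrease of V, whence
   the gradients are square summable. Then every cluster point of (x_k) is a minimizer, and
   V_k(z) - V_k(w) is affine in <x_(k+1), w - z>, so these inner products converge for all minimizers
   z, w; Opial's argument yields convergence of the whole sequence. *)

lemma has_field_derivative_along_line:
  fixes f :: "'a::real_inner \<Rightarrow> real"
  assumes grad: "\<And>y. (f has_derivative (\<lambda>h. g y \<bullet> h)) (at y)"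
  shows "((\<lambda>s. f (a + s *\<^sub>R d)) has_field_derivative (g (a + s *\<^sub>R d) \<bullet> d)) (at s)"
proof -
  have "((\<lambda>s. a + s *\<^sub>R d) has_derivative (\<lambda>h. h *\<^sub>R d)) (at s)"
    by (auto intro!: derivative_eq_intros)
  from has_derivative_compose[OF this grad]
  have "((\<lambda>s. f (a + s *\<^sub>R d)) has_derivative (\<lambda>h. g (a + s *\<^sub>R d) \<bullet> (h *\<^sub>R d))) (at s)"
    by (simp add: o_def)
  then show ?thesis
    by (rule has_derivative_imp_has_field_derivative) simp
qed

lemma convex_on_gradient_inequality:
  fixes f :: "'a::real_inner \<Rightarrow> real"
  assumes convex: "convex_on UNIV f"
    and grad: "\<And>y. (f has_derivative (\<lambda>h. g y \<bullet> h)) (at y)"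
  shows "f z + g z \<bullet> (y - z) \<le> f y"
proof -
  define h where "h s = f (z + s *\<^sub>R (y - z))" for s
  have "convex_on UNIV h"
  proof (rule convex_onI)
    fix t u v :: real
    assume "0 < t" "t < 1"
    moreover have "z + ((1 - t) * u + t * v) *\<^sub>R (y - z)
        = (1 - t) *\<^sub>R (z + u *\<^sub>R (y - z)) + t *\<^sub>R (z + v *\<^sub>R (y - z))"
      by (simp add: algebra_simps)
    ultimately show "h ((1 - t) *\<^sub>R u + t *\<^sub>R v) \<le> (1 - t) * h u + t * h v"
      unfolding h_def using convex_onD[OF convex, of t] by simp
  qed simp
  moreover have "(h has_field_derivative (g z \<bullet> (y - z))) (at 0 within UNIV)"
    unfolding h_def using has_field_derivative_along_line[OF grad, of z "y - z" 0] by simp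
  ultimately have "h 1 - h 0 \<ge> (g z \<bullet> (y - z)) * (1 - 0)"
    by (intro convex_on_imp_above_tangent) auto
  then show ?thesis
    unfolding h_def by simp
qed

lemma lipschitz_descent:
  fixes f :: "'a::real_inner \<Rightarrow> real"
  assumes grad: "\<And>y. (f has_derivative (\<lambda>h. g y \<bullet> h)) (at y)"
    and lip: "K-lipschitz_on (cball a (norm d)) g"
  shows "f (a + d) \<le> f a + g a \<bullet> d + K / 2 * (norm d)\<^sup>2"
proof -
  define \<psi> where "\<psi> s = f (a + s *\<^sub>R d) - s * (g a \<bullet> d) - K / 2 * s\<^sup>2 * (norm d)\<^sup>2" for s
  have "\<psi> 1 \<le> \<psi> 0"
  proof (rule DERIV_nonpos_imp_nonincreasing[of 0 1 \<psi>])
    fix s :: real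
    assume s: "0 \<le> s" "s \<le> 1"
    have "(\<psi> has_field_derivative
        (g (a + s *\<^sub>R d) \<bullet> d - g a \<bullet> d - K / 2 * (2 * s) * (norm d)\<^sup>2)) (at s)"
      unfolding \<psi>_def by (auto intro!: derivative_eq_intros has_field_derivative_along_line[OF grad])
    moreover have "a + s *\<^sub>R d \<in> cball a (norm d)"
      using s by (simp add: dist_norm mult_left_le_one_le)
    then have "g (a + s *\<^sub>R d) \<bullet> d - g a \<bullet> d \<le> K * (s * norm d) * norm d"
      using lipschitz_onD[OF lip, of "a + s *\<^sub>R d" a] norm_cauchy_schwarz[of "g (a + s *\<^sub>R d) - g a" d] s
      by (simp add: inner_diff_left dist_norm mult_right_mono order_trans)
    ultimately show "\<exists>y. DERIV \<psi> s :> y \<and> y \<le> 0"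
      by (auto simp: power2_eq_square algebra_simps)
  qed simp
  then show ?thesis
    unfolding \<psi>_def by simp
qed

lemma argmin_set_iff_gradient_zero:
  fixes f :: "'a::real_inner \<Rightarrow> real"
  assumes convex: "convex_on UNIV f"
    and grad: "\<And>y. (f has_derivative (\<lambda>h. g y \<bullet> h)) (at y)"
  shows "z \<in> argmin_set f \<longleftrightarrow> g z = 0"
proof
  assume "z \<in> argmin_set f"
  then have "(\<lambda>h. g z \<bullet> h) = (\<lambda>h. 0)"
    by (intro has_derivative_local_min[OF grad]) (auto simp: argmin_set_def)
  then show "g z = 0"
    by (metis inner_eq_zero_iff)
next
  assume "g z = 0"
  then show "z \<in> argmin_set f"
    using convex_on_gradient_inequality[OF convex grad, of z] by (simp add: argmin_set_def)
qed

lemma argmin_set_closed: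
  assumes "continuous_on UNIV f"
  shows "closed (argmin_set f)"
proof -
  have "argmin_set f = (\<Inter>y. {x. f x \<le> f y})"
    by (auto simp: argmin_set_def)
  then show ?thesis
    by (simp add: closed_INT closed_Collect_le assms)
qed

lemma Inf_eq_argmin_value:
  "z \<in> argmin_set f \<Longrightarrow> (INF y. f y) = f z"
  unfolding argmin_set_def by (rule cInf_eq_minimum) auto

lemma minimizer_gradient_inequality:
  fixes f :: "'a::real_inner \<Rightarrow> real"
  assumes convex: "convex_on UNIV f"
    and grad: "\<And>y. (f has_derivative (\<lambda>h. g y \<bullet> h)) (at y)"
    and z: "z \<in> argmin_set f"
    and K: "K > 0" "K-lipschitz_on (cball z (norm (g y) / K)) g"
  shows "f y - f z + (norm (g y))\<^sup>2 / (2 * K) \<le> g y \<bullet> (y - z)"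
proof -
  define d where "d = (1 / K) *\<^sub>R g y"
  have "norm d = norm (g y) / K"
    using K by (simp add: d_def)
  then have "f (z + d) \<le> f z + g z \<bullet> d + K / 2 * (norm d)\<^sup>2"
    using lipschitz_descent[OF grad] K(2) by metis
  also have "\<dots> = f z + (norm (g y))\<^sup>2 / (2 * K)"
    using z K \<open>norm d = norm (g y) / K\<close>
    by (simp add: argmin_set_iff_gradient_zero[OF convex grad] power2_eq_square)
  finally have "f y + g y \<bullet> (z + d - y) \<le> f z + (norm (g y))\<^sup>2 / (2 * K)"
    using convex_on_gradient_inequality[OF convex grad, of y "z + d"] by linarith
  moreover have "g y \<bullet> d = (norm (g y))\<^sup>2 / K"
    by (simp add: d_def power2_norm_eq_inner)
  ultimately show ?thesis
    by (simp add: inner_diff_right inner_add_right)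
qed

lemma locally_lipschitz_imp_lipschitz_on_compact:
  assumes "locally_lipschitz g" "compact S"
  obtains K where "K-lipschitz_on S g"
proof -
  have "local_lipschitz {0::real} S (\<lambda>_. g)"
  proof (rule local_lipschitzI)
    fix y
    obtain e L where "e > 0" and L: "\<forall>u\<in>ball y e. \<forall>v\<in>ball y e. dist (g u) (g v) \<le> L * dist u v"
      using assms(1) unfolding locally_lipschitz_def by metis
    have "(max L 0)-lipschitz_on (cball y (e / 2) \<inter> S) g"
    proof (rule lipschitz_onI)
      fix u v
      assume "u \<in> cball y (e / 2) \<inter> S" "v \<in> cball y (e / 2) \<inter> S"
      then have "dist (g u) (g v) \<le> L * dist u v"
        using L \<open>e > 0\<close> by simp
      also have "\<dots> \<le> max L 0 * dist u v"
        by (intro mult_right_mono) auto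
      finally show "dist (g u) (g v) \<le> max L 0 * dist u v" .
    qed simp
    then show "\<exists>u>0. \<exists>L. \<forall>t\<in>cball t u \<inter> {0}. L-lipschitz_on (cball y u \<inter> S) g" for t :: real
      using \<open>e > 0\<close> by (intro exI[of _ "e / 2"]) auto
  qed
  then obtain K where "\<And>t. t \<in> {0::real} \<Longrightarrow> K-lipschitz_on S g"
    by (rule local_lipschitz_compact_implies_lipschitz[OF _ assms(2)]) auto
  with that show ?thesis
    by blast
qed

section \<open>Opial's lemma\<close>

lemma bounded_unique_cluster_point_imp_LIMSEQ:
  fixes x :: "nat \<Rightarrow> 'a::heine_borel"
  assumes bounded: "bounded (range x)"
    and unique: "\<And>r q. strict_mono r \<Longrightarrow> (x \<circ> r) \<longlonglongrightarrow> q \<Longrightarrow> q = p"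
  shows "x \<longlonglongrightarrow> p"
proof (rule ccontr)
  assume "\<not> x \<longlonglongrightarrow> p"
  then obtain e where "e > 0" and "\<not> eventually (\<lambda>n. dist (x n) p < e) sequentially"
    unfolding tendsto_iff by blast
  then have "infinite {n. e \<le> dist (x n) p}"
    by (simp add: not_eventually not_less flip: cofinite_eq_sequentially frequently_cofinite)
  then obtain r :: "nat \<Rightarrow> nat" where r: "strict_mono r" "\<And>n. e \<le> dist (x (r n)) p"
    using infinite_enumerate by blast
  have "bounded (range (x \<circ> r))"
    using bounded by (rule bounded_subset) auto
  then obtain q r' where r': "strict_mono r'" and q: "((x \<circ> r) \<circ> r') \<longlonglongrightarrow> q"
    using bounded_imp_convergent_subsequence by blast
  have "e \<le> dist q p"
    using q r(2) unfolding o_def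
    by (intro LIMSEQ_le_const[where X = "\<lambda>n. dist (x (r (r' n))) p"]) (auto intro!: tendsto_intros)
  moreover have "q = p"
    using unique[OF strict_mono_o[OF r(1) r']] q by (simp add: o_assoc)
  ultimately show False
    using \<open>e > 0\<close> by simp
qed

lemma Opial_LIMSEQ:
  fixes x :: "nat \<Rightarrow> 'a::euclidean_space"
  assumes bounded: "bounded (range x)"
    and cluster: "\<And>r q. strict_mono r \<Longrightarrow> (x \<circ> r) \<longlonglongrightarrow> q \<Longrightarrow> q \<in> S"
    and inner: "\<And>z w. z \<in> S \<Longrightarrow> w \<in> S \<Longrightarrow> convergent (\<lambda>k. x k \<bullet> (w - z))"
  obtains p where "p \<in> S" "x \<longlonglongrightarrow> p"
proof -
  obtain p r where r: "strict_mono r" and p: "(x \<circ> r) \<longlonglongrightarrow> p"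
    using bounded_imp_convergent_subsequence[OF bounded] by blast
  have "q = p" if r': "strict_mono r'" and q: "(x \<circ> r') \<longlonglongrightarrow> q" for r' q
  proof -
    obtain l where l: "(\<lambda>k. x k \<bullet> (q - p)) \<longlonglongrightarrow> l"
      using inner[OF cluster[OF r p] cluster[OF r' q]] by (auto simp: convergent_def)
    have "(\<lambda>k. (x \<circ> r) k \<bullet> (q - p)) \<longlonglongrightarrow> l" "(\<lambda>k. (x \<circ> r') k \<bullet> (q - p)) \<longlonglongrightarrow> l"
      using LIMSEQ_subseq_LIMSEQ[OF l r] LIMSEQ_subseq_LIMSEQ[OF l r'] by (simp_all add: o_def)
    moreover have "(\<lambda>k. (x \<circ> r) k \<bullet> (q - p)) \<longlonglongrightarrow> p \<bullet> (q - p)"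
      "(\<lambda>k. (x \<circ> r') k \<bullet> (q - p)) \<longlonglongrightarrow> q \<bullet> (q - p)"
      using p q unfolding o_def by (auto intro!: tendsto_intros)
    ultimately have "(q - p) \<bullet> (q - p) = 0"
      by (metis LIMSEQ_unique inner_diff_left right_minus_eq)
    then show "q = p"
      by simp
  qed
  then show ?thesis
    using that cluster[OF r p] bounded_unique_cluster_point_imp_LIMSEQ[OF bounded] by blast
qed

(* s is the effective step size alpha_k gamma_k; the assumptions are the only properties of the
   AdaSGA step-size rule that the Lyapunov analysis needs. *)
locale adaptive_gradient_method =
  fixes f :: "'a::euclidean_space \<Rightarrow> real"
    and g :: "'a \<Rightarrow> 'a"
    and x :: "nat \<Rightarrow> 'a"
    and s \<theta> :: "nat \<Rightarrow> real"
    and \<omega> :: real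
  assumes convex: "convex_on UNIV f"
    and grad: "\<And>y. (f has_derivative (\<lambda>h. g y \<bullet> h)) (at y)"
    and iterate: "\<And>k. x (Suc k) = x k - s k *\<^sub>R g (x k)"
    and step_pos: "\<And>k. 0 < s k"
    and theta_0: "0 \<le> \<theta> 0"
    and theta_Suc: "\<And>k. \<theta> (Suc k) = s (Suc k) / s k"
    and omega_sq_le: "\<omega>\<^sup>2 \<le> 1 / 2"
    and local_curvature: "\<And>k. s (Suc k) * norm (g (x (Suc k)) - g (x k)) \<le> \<omega> * norm (x (Suc k) - x k)"
    and step_growth: "\<And>k. s (Suc k) * \<theta> (Suc k) \<le> s k * (2 * (1 - \<omega>\<^sup>2) + \<theta> k)"
begin

lemma gradient_inequality: "f z + g z \<bullet> (y - z) \<le> f y"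
  by (rule convex_on_gradient_inequality[OF convex grad])

lemma value_gap_le_gradient: "f y - f z \<le> g y \<bullet> (y - z)"
  using gradient_inequality[of y z] by (simp add: inner_diff_right)

lemma theta_nonneg: "0 \<le> \<theta> k"
  by (cases k) (simp_all add: theta_0 theta_Suc step_pos less_imp_le)

lemma iterate_diff: "x (Suc k) - x k = - s k *\<^sub>R g (x k)"
  by (simp add: iterate)

lemma norm_iterate_diff_sq: "(norm (x (Suc k) - x k))\<^sup>2 = (s k * norm (g (x k)))\<^sup>2"
  using step_pos[of k] by (simp add: iterate_diff)

lemma dist_iterate_Suc_sq:
  "(norm (x (Suc k) - z))\<^sup>2
     = (norm (x k - z))\<^sup>2 - 2 * s k * (g (x k) \<bullet> (x k - z)) + (norm (x (Suc k) - x k))\<^sup>2"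
proof -
  have "(norm (x (Suc k) - z))\<^sup>2
      = (norm (x k - z))\<^sup>2 + 2 * ((x k - z) \<bullet> (x (Suc k) - x k)) + (norm (x (Suc k) - x k))\<^sup>2"
    by (simp add: power2_norm_eq_inner inner_diff_left inner_diff_right inner_commute)
  moreover have "(x k - z) \<bullet> (x (Suc k) - x k) = - s k * (g (x k) \<bullet> (x k - z))"
    by (simp add: iterate_diff inner_commute)
  ultimately show ?thesis
    by simp
qed

lemma step_length_bound:
  "(norm (x (Suc (Suc k)) - x (Suc k)))\<^sup>2
     \<le> s (Suc k) * \<theta> (Suc k) * (f (x k) - f (x (Suc k))) + \<omega>\<^sup>2 * (norm (x (Suc k) - x k))\<^sup>2"
proof -
  define p where "p = x (Suc k) - x k"
  define q where "q = x (Suc (Suc k)) - x (Suc k)"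
  define t where "t = \<theta> (Suc k)"
  define \<Delta> where "\<Delta> = f (x k) - f (x (Suc k))"
  have t_s: "t * s k = s (Suc k)"
    using step_pos[of k] by (simp add: t_def theta_Suc)
  have "0 \<le> t"
    using theta_nonneg by (simp add: t_def)
  have "q - t *\<^sub>R p = - s (Suc k) *\<^sub>R (g (x (Suc k)) - g (x k))"
    by (simp add: p_def q_def iterate_diff scaleR_diff_right flip: t_s)
  then have "norm (q - t *\<^sub>R p) \<le> \<omega> * norm p"
    using local_curvature[of k] step_pos[of "Suc k"] by (simp add: p_def)
  then have "(norm (q - t *\<^sub>R p))\<^sup>2 \<le> (\<omega> * norm p)\<^sup>2"
    by (simp add: power_mono)
  moreover have "(norm (q - t *\<^sub>R p))\<^sup>2 = (norm q)\<^sup>2 - 2 * (q \<bullet> (t *\<^sub>R p)) + (norm (t *\<^sub>R p))\<^sup>2"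
    unfolding dot_norm_neg[of q "t *\<^sub>R p"] by (simp add: field_simps)
  ultimately have curvature: "(norm q)\<^sup>2 - 2 * t * (q \<bullet> p) + t\<^sup>2 * (norm p)\<^sup>2 \<le> \<omega>\<^sup>2 * (norm p)\<^sup>2"
    using \<open>0 \<le> t\<close> by (simp add: power_mult_distrib)
  have "f (x (Suc k)) + g (x (Suc k)) \<bullet> (x k - x (Suc k)) \<le> f (x k)"
    by (rule gradient_inequality)
  then have "s k * (g (x (Suc k)) \<bullet> g (x k)) \<le> \<Delta>"
    by (simp add: \<Delta>_def iterate)
  moreover have "q \<bullet> p = s (Suc k) * (s k * (g (x (Suc k)) \<bullet> g (x k)))"
    by (simp add: p_def q_def iterate_diff)
  ultimately have "q \<bullet> p \<le> s (Suc k) * \<Delta>"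
    using step_pos[of "Suc k"] by (simp add: mult_left_mono)
  then have cross: "2 * t * (q \<bullet> p) \<le> 2 * t * (s (Suc k) * \<Delta>)"
    using \<open>0 \<le> t\<close> by (simp add: mult_left_mono)
  have "f (x k) + g (x k) \<bullet> (x (Suc k) - x k) \<le> f (x (Suc k))"
    by (rule gradient_inequality)
  then have "\<Delta> \<le> s k * (norm (g (x k)))\<^sup>2"
    by (simp add: \<Delta>_def iterate_diff power2_norm_eq_inner)
  then have "s k * \<Delta> \<le> (norm p)\<^sup>2"
    unfolding p_def norm_iterate_diff_sq
    using step_pos[of k] by (simp add: power2_eq_square mult.commute mult.left_commute)
  then have "t * s (Suc k) * \<Delta> \<le> t\<^sup>2 * (norm p)\<^sup>2"
    using \<open>0 \<le> t\<close> mult_left_mono[of "s k * \<Delta>" "(norm p)\<^sup>2" "t\<^sup>2"]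
    by (simp add: power2_eq_square flip: t_s)
  with curvature cross show ?thesis
    by (simp add: p_def q_def t_def \<Delta>_def algebra_simps)
qed

definition lyapunov :: "'a \<Rightarrow> nat \<Rightarrow> real" where
  "lyapunov z k = (1 - \<omega>\<^sup>2) * (norm (x (Suc k) - z))\<^sup>2 + \<omega>\<^sup>2 * (norm (x (Suc k) - x k))\<^sup>2
     + s (Suc k) * \<theta> (Suc k) * (f (x k) - f z)"

(* For k > 0 the right-hand side is at most lyapunov z (k - 1) by step_length_bound;
   for k = 0 it yields the bound on the initial value. *)
lemma lyapunov_one_step_bound:
  assumes z: "z \<in> argmin_set f"
    and E: "f (x k) - f z + E \<le> g (x k) \<bullet> (x k - z)"
  shows "lyapunov z k + 2 * (1 - \<omega>\<^sup>2) * s k * E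
    \<le> (1 - \<omega>\<^sup>2) * (norm (x k - z))\<^sup>2 + (norm (x (Suc k) - x k))\<^sup>2 + s k * \<theta> k * (f (x k) - f z)"
proof -
  define c where "c = 1 - \<omega>\<^sup>2"
  define F where "F = f (x k) - f z"
  define G where "G = g (x k) \<bullet> (x k - z)"
  define Q where "Q = (norm (x (Suc k) - x k))\<^sup>2"
  have "0 < c" "0 \<le> F"
    using omega_sq_le z by (auto simp: c_def F_def argmin_set_def)
  have "c * s k * (F + E) \<le> c * s k * G"
    using E step_pos[of k] \<open>0 < c\<close> unfolding F_def G_def by (intro mult_left_mono) simp_all
  moreover have "s (Suc k) * \<theta> (Suc k) * F \<le> s k * (2 * c + \<theta> k) * F"
    using step_growth[of k] \<open>0 \<le> F\<close> unfolding c_def by (rule mult_right_mono)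
  moreover have "lyapunov z k = c * ((norm (x k - z))\<^sup>2 - 2 * s k * G + Q) + (1 - c) * Q
      + s (Suc k) * \<theta> (Suc k) * F"
    unfolding lyapunov_def dist_iterate_Suc_sq[of k z] by (simp add: c_def F_def G_def Q_def)
  ultimately show ?thesis
    unfolding c_def[symmetric] F_def[symmetric] Q_def[symmetric] by (simp add: algebra_simps)
qed

lemma lyapunov_Suc_le:
  assumes z: "z \<in> argmin_set f"
    and E: "f (x (Suc k)) - f z + E \<le> g (x (Suc k)) \<bullet> (x (Suc k) - z)"
  shows "lyapunov z (Suc k) + 2 * (1 - \<omega>\<^sup>2) * s (Suc k) * E \<le> lyapunov z k"
  using lyapunov_one_step_bound[OF z E] step_length_bound[of k]
  by (simp add: lyapunov_def algebra_simps)

lemma lyapunov_decreasing: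
  assumes "z \<in> argmin_set f"
  shows "decseq (lyapunov z)"
proof (rule decseq_SucI)
  fix k
  show "lyapunov z (Suc k) \<le> lyapunov z k"
    using lyapunov_Suc_le[OF assms, of k 0] value_gap_le_gradient[of "x (Suc k)" z] by simp
qed

lemma lyapunov_lower_bound:
  assumes "z \<in> argmin_set f"
  shows "(1 - \<omega>\<^sup>2) * (norm (x (Suc k) - z))\<^sup>2 \<le> lyapunov z k"
proof -
  have "0 \<le> s (Suc k) * \<theta> (Suc k) * (f (x k) - f z)"
    using assms step_pos[of "Suc k"] theta_nonneg[of "Suc k"] by (simp add: argmin_set_def)
  then show ?thesis
    by (simp add: lyapunov_def)
qed

lemma lyapunov_nonneg:
  assumes "z \<in> argmin_set f"
  shows "0 \<le> lyapunov z k"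
proof -
  have "0 \<le> (1 - \<omega>\<^sup>2) * (norm (x (Suc k) - z))\<^sup>2"
    using omega_sq_le by simp
  then show ?thesis
    using lyapunov_lower_bound[OF assms, of k] by linarith
qed

definition initial_energy :: "'a \<Rightarrow> real" where
  "initial_energy z = (norm (x 0 - z))\<^sup>2 + 2 * (s 0 * norm (g (x 0)))\<^sup>2
     + 2 * s 0 * \<theta> 0 * (f (x 0) - f z)"

lemma lyapunov_0_le:
  assumes z: "z \<in> argmin_set f"
  shows "lyapunov z 0 \<le> (1 - \<omega>\<^sup>2) * initial_energy z"
proof -
  define A where "A = (s 0 * norm (g (x 0)))\<^sup>2 + s 0 * \<theta> 0 * (f (x 0) - f z)"
  have "0 \<le> A"
    using z step_pos[of 0] theta_0 by (simp add: A_def argmin_set_def)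
  moreover have "1 \<le> 2 * (1 - \<omega>\<^sup>2)"
    using omega_sq_le by simp
  ultimately have "A \<le> (1 - \<omega>\<^sup>2) * (2 * A)"
    using mult_right_mono[of 1 "2 * (1 - \<omega>\<^sup>2)" A] by (simp add: algebra_simps)
  moreover have "lyapunov z 0 \<le> (1 - \<omega>\<^sup>2) * (norm (x 0 - z))\<^sup>2 + A"
    using lyapunov_one_step_bound[OF z, of 0 0] value_gap_le_gradient[of "x 0" z]
    by (simp add: A_def norm_iterate_diff_sq)
  ultimately show ?thesis
    by (simp add: A_def initial_energy_def algebra_simps)
qed

lemma dist_iterate_sq_le:
  assumes z: "z \<in> argmin_set f"
  shows "(norm (x k - z))\<^sup>2 \<le> initial_energy z"
proof (cases k)
  case 0
  have "0 \<le> 2 * s 0 * \<theta> 0 * (f (x 0) - f z)"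
    using z step_pos[of 0] theta_0 by (simp add: argmin_set_def)
  then show ?thesis
    using 0 by (simp add: initial_energy_def)
next
  case (Suc j)
  have "(1 - \<omega>\<^sup>2) * (norm (x (Suc j) - z))\<^sup>2 \<le> lyapunov z j"
    by (rule lyapunov_lower_bound[OF z])
  also have "\<dots> \<le> lyapunov z 0"
    using lyapunov_decreasing[OF z] by (simp add: decseq_def)
  also have "\<dots> \<le> (1 - \<omega>\<^sup>2) * initial_energy z"
    by (rule lyapunov_0_le[OF z])
  finally show ?thesis
    using Suc omega_sq_le by simp
qed

lemma initial_energy_nonneg: "z \<in> argmin_set f \<Longrightarrow> 0 \<le> initial_energy z"
  using dist_iterate_sq_le[of z 0] by (meson order_trans zero_le_power2)

lemma bounded_iterates:
  assumes "argmin_set f \<noteq> {}"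
  shows "bounded (range x)"
proof -
  obtain z where z: "z \<in> argmin_set f"
    using assms by blast
  have "dist z (x k) \<le> sqrt (initial_energy z)" for k
    using dist_iterate_sq_le[OF z, of k] by (simp add: dist_norm norm_minus_commute real_le_rsqrt)
  then show ?thesis
    unfolding bounded_def by blast
qed

lemma summable_gradient_sq:
  assumes z: "z \<in> argmin_set f"
    and step_lower: "0 < l" "\<And>k. l \<le> s k"
    and gradient_lower: "0 < c" "\<And>k. f (x k) - f z + c * (norm (g (x k)))\<^sup>2 \<le> g (x k) \<bullet> (x k - z)"
  shows "summable (\<lambda>k. (norm (g (x k)))\<^sup>2)"
proof -
  define a where "a = 2 * (1 - \<omega>\<^sup>2) * l * c"
  have "0 < a"
    using omega_sq_le step_lower gradient_lower by (simp add: a_def)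
  have step: "a * (norm (g (x (Suc k))))\<^sup>2 \<le> lyapunov z k - lyapunov z (Suc k)" for k
  proof -
    have "a * (norm (g (x (Suc k))))\<^sup>2 \<le> 2 * (1 - \<omega>\<^sup>2) * s (Suc k) * (c * (norm (g (x (Suc k))))\<^sup>2)"
      using omega_sq_le step_lower gradient_lower
      by (simp add: a_def mult_right_mono mult_left_mono)
    then show ?thesis
      using lyapunov_Suc_le[OF z gradient_lower(2), of k] by linarith
  qed
  have "a * (\<Sum>k<n. (norm (g (x (Suc k))))\<^sup>2) \<le> lyapunov z 0" for n
  proof -
    have "a * (\<Sum>k<n. (norm (g (x (Suc k))))\<^sup>2) \<le> (\<Sum>k<n. lyapunov z k - lyapunov z (Suc k))"
      unfolding sum_distrib_left by (intro sum_mono step)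
    also have "\<dots> = lyapunov z 0 - lyapunov z n"
      by (rule sum_lessThan_telescope')
    also have "\<dots> \<le> lyapunov z 0"
      using lyapunov_nonneg[OF z, of n] by simp
    finally show ?thesis .
  qed
  then have "(\<Sum>k<n. (norm (g (x (Suc k))))\<^sup>2) \<le> lyapunov z 0 / a" for n
    using \<open>0 < a\<close> by (simp add: field_simps)
  then have "summable (\<lambda>k. (norm (g (x (Suc k))))\<^sup>2)"
    by (intro summableI_nonneg_bounded) auto
  then show ?thesis
    by (rule summable_Suc_iff[THEN iffD1])
qed

lemma inner_iterates_convergent:
  assumes z: "z \<in> argmin_set f" and w: "w \<in> argmin_set f"
  shows "convergent (\<lambda>k. x k \<bullet> (w - z))"
proof -
  obtain Lz Lw where "lyapunov z \<longlonglongrightarrow> Lz" "lyapunov w \<longlonglongrightarrow> Lw"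
    using decseq_convergent lyapunov_decreasing lyapunov_nonneg z w by metis
  then have "(\<lambda>k. (lyapunov z k - lyapunov w k) / (2 * (1 - \<omega>\<^sup>2)) - ((norm z)\<^sup>2 - (norm w)\<^sup>2) / 2)
      \<longlonglongrightarrow> (Lz - Lw) / (2 * (1 - \<omega>\<^sup>2)) - ((norm z)\<^sup>2 - (norm w)\<^sup>2) / 2"
    by (intro tendsto_intros) (use omega_sq_le in auto)
  moreover have "(lyapunov z k - lyapunov w k) / (2 * (1 - \<omega>\<^sup>2)) - ((norm z)\<^sup>2 - (norm w)\<^sup>2) / 2
      = x (Suc k) \<bullet> (w - z)" for k
  proof -
    have "f z = f w"
      using z w by (auto simp: argmin_set_def intro: order.antisym)
    then have "lyapunov z k - lyapunov w k
        = (1 - \<omega>\<^sup>2) * ((norm (x (Suc k) - z))\<^sup>2 - (norm (x (Suc k) - w))\<^sup>2)"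
      by (simp add: lyapunov_def algebra_simps)
    also have "\<dots> = (1 - \<omega>\<^sup>2) * (2 * (x (Suc k) \<bullet> (w - z)) + (norm z)\<^sup>2 - (norm w)\<^sup>2)"
      by (simp add: power2_norm_eq_inner inner_diff_left inner_diff_right inner_commute)
    finally show ?thesis
      using omega_sq_le by (simp add: field_simps)
  qed
  ultimately have "(\<lambda>k. x (Suc k) \<bullet> (w - z)) \<longlonglongrightarrow>
      (Lz - Lw) / (2 * (1 - \<omega>\<^sup>2)) - ((norm z)\<^sup>2 - (norm w)\<^sup>2) / 2"
    by simp
  then show ?thesis
    unfolding convergent_def by (blast intro: LIMSEQ_imp_Suc)
qed

lemma LIMSEQ_minimizer:
  assumes "argmin_set f \<noteq> {}" and "continuous_on UNIV g" and "(\<lambda>k. g (x k)) \<longlonglongrightarrow> 0"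
  obtains p where "p \<in> argmin_set f" "x \<longlonglongrightarrow> p"
proof (rule Opial_LIMSEQ[OF bounded_iterates[OF assms(1)] _ inner_iterates_convergent])
  fix r q
  assume "strict_mono r" "(x \<circ> r) \<longlonglongrightarrow> q"
  then have "(\<lambda>k. g (x (r k))) \<longlonglongrightarrow> g q"
    using assms(2) by (auto simp: o_def continuous_on_eq_continuous_at intro: isCont_tendsto_compose)
  moreover have "(\<lambda>k. g (x (r k))) \<longlonglongrightarrow> 0"
    using LIMSEQ_subseq_LIMSEQ[OF assms(3) \<open>strict_mono r\<close>] by (simp add: o_def)
  ultimately show "q \<in> argmin_set f"
    using LIMSEQ_unique argmin_set_iff_gradient_zero[OF convex grad] by metis
qed (use that in auto)

end

section \<open>The AdaSGA step-size rule\<close>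

locale adasga =
  fixes f :: "'a::euclidean_space \<Rightarrow> real"
    and g :: "'a \<Rightarrow> 'a"
    and x :: "nat \<Rightarrow> 'a"
    and \<alpha> \<theta> \<gamma> L :: "nat \<Rightarrow> real"
    and \<tau> \<omega> \<gamma>min \<gamma>max R :: real
  assumes convex: "convex_on UNIV f"
    and grad: "\<And>y. (f has_derivative (\<lambda>h. g y \<bullet> h)) (at y)"
    and grad_cont: "continuous_on UNIV g"
    and grad_lip: "locally_lipschitz g"
    and nonempty: "argmin_set f \<noteq> {}"
    and alpha0: "\<alpha> 0 > 0"
    and theta0: "\<theta> 0 > 0"
    and tau: "\<tau> \<ge> 1"
    and omega: "0 < \<omega>" "\<omega> \<le> 1 / sqrt 2"
    and gamma_bounds: "0 < \<gamma>min" "\<And>k. \<gamma>min \<le> \<gamma> k" "\<And>k. \<gamma> k \<le> \<gamma>max"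
    and x_step: "\<And>k. x (Suc k) = x k - (\<alpha> k * \<gamma> k) *\<^sub>R g (x k)"
    and L_def: "\<And>k. k \<ge> 1 \<Longrightarrow>
        L k = norm (g (x k) - g (x (k - 1))) / norm (x k - x (k - 1))"
    and alpha_def: "\<And>k. k \<ge> 1 \<Longrightarrow>
        \<alpha> k = (if L k = 0
                 then \<alpha> (k - 1) * \<gamma> (k - 1) / \<gamma> k * sqrt (2 * (1 - \<omega>\<^sup>2) + \<theta> (k - 1) / \<tau>)
                 else min (\<alpha> (k - 1) * \<gamma> (k - 1) / \<gamma> k * sqrt (2 * (1 - \<omega>\<^sup>2) + \<theta> (k - 1) / \<tau>))
                          (\<omega> / (\<gamma> k * L k)))"
    and theta_def: "\<And>k. k \<ge> 1 \<Longrightarrow> \<theta> k = \<alpha> k * \<gamma> k / (\<alpha> (k - 1) * \<gamma> (k - 1))"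
    and R: "R > sqrt (infdist (x 0) (argmin_set f) ^ 2
                 + 2 * \<alpha> 0 ^ 2 * \<gamma> 0 ^ 2 * norm (g (x 0)) ^ 2
                 + 2 * \<alpha> 0 * \<gamma> 0 * \<theta> 0 * (f (x 0) - (INF y. f y)))
             + infdist (x 0) (argmin_set f) + norm (x 0)"
begin

definition step_size :: "nat \<Rightarrow> real" where
  "step_size k = \<alpha> k * \<gamma> k"

definition growth_factor :: "nat \<Rightarrow> real" where
  "growth_factor k = sqrt (2 * (1 - \<omega>\<^sup>2) + \<theta> k / \<tau>)"

lemma gamma_pos: "0 < \<gamma> k"
  using gamma_bounds(1) gamma_bounds(2)[of k] by linarith

lemma omega_sq_le: "\<omega>\<^sup>2 \<le> 1 / 2"
proof -
  have "\<omega>\<^sup>2 \<le> (1 / sqrt 2)\<^sup>2"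
    using omega by (intro power_mono) auto
  then show ?thesis
    by (simp add: power_divide)
qed

lemma L_Suc: "L (Suc k) = norm (g (x (Suc k)) - g (x k)) / norm (x (Suc k) - x k)"
  using L_def[of "Suc k"] by simp

lemma L_Suc_nonneg: "0 \<le> L (Suc k)"
  by (simp add: L_Suc)

lemma step_size_Suc:
  "step_size (Suc k) = (if L (Suc k) = 0 then step_size k * growth_factor k
     else min (step_size k * growth_factor k) (\<omega> / L (Suc k)))"
proof -
  have "\<gamma> (Suc k) > 0"
    by (rule gamma_pos)
  moreover have "\<alpha> (Suc k) = (if L (Suc k) = 0 then step_size k * growth_factor k / \<gamma> (Suc k)
      else min (step_size k * growth_factor k / \<gamma> (Suc k)) (\<omega> / L (Suc k) / \<gamma> (Suc k)))"
    using alpha_def[of "Suc k"] by (simp add: step_size_def growth_factor_def mult.commute)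
  ultimately show ?thesis
    by (simp add: step_size_def min_mult_distrib_right)
qed

lemma theta_Suc_eq: "\<theta> (Suc k) = step_size (Suc k) / step_size k"
  using theta_def[of "Suc k"] by (simp add: step_size_def)

lemma step_size_pos_theta_pos: "0 < step_size k \<and> 0 < \<theta> k"
proof (induction k)
  case 0
  then show ?case
    using alpha0 theta0 gamma_pos[of 0] by (simp add: step_size_def)
next
  case (Suc k)
  have "0 < 2 * (1 - \<omega>\<^sup>2) + \<theta> k / \<tau>"
    using omega_sq_le Suc tau by (simp add: add_pos_pos)
  then have "0 < step_size k * growth_factor k"
    using Suc by (simp add: growth_factor_def)
  then have "0 < step_size (Suc k)"
    using omega L_Suc_nonneg[of k] by (auto simp: step_size_Suc)
  then show ?case
    using Suc by (simp add: theta_Suc_eq)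
qed

lemma growth_factor_ge_1: "1 \<le> growth_factor k"
proof -
  have "1 \<le> 2 * (1 - \<omega>\<^sup>2) + \<theta> k / \<tau>"
    using omega_sq_le step_size_pos_theta_pos[of k] tau by (simp add: add_increasing2)
  then show ?thesis
    by (simp add: growth_factor_def)
qed

lemma step_growth: "step_size (Suc k) * \<theta> (Suc k) \<le> step_size k * (2 * (1 - \<omega>\<^sup>2) + \<theta> k)"
proof -
  have pos: "0 < step_size k" "0 < step_size (Suc k)" "0 < \<theta> k"
    using step_size_pos_theta_pos by auto
  have "step_size (Suc k) \<le> step_size k * growth_factor k"
    by (simp add: step_size_Suc)
  then have "(step_size (Suc k))\<^sup>2 \<le> (step_size k * growth_factor k)\<^sup>2"
    using pos by (intro power_mono) auto
  also have "\<dots> = (step_size k)\<^sup>2 * (2 * (1 - \<omega>\<^sup>2) + \<theta> k / \<tau>)"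
    using omega_sq_le pos tau by (simp add: growth_factor_def power_mult_distrib)
  also have "\<dots> \<le> (step_size k)\<^sup>2 * (2 * (1 - \<omega>\<^sup>2) + \<theta> k)"
    using pos tau by (intro mult_left_mono) (auto simp: divide_le_eq)
  finally have "(step_size (Suc k))\<^sup>2 / step_size k
      \<le> (step_size k)\<^sup>2 * (2 * (1 - \<omega>\<^sup>2) + \<theta> k) / step_size k"
    using pos by (simp add: divide_right_mono)
  then show ?thesis
    using pos by (simp add: theta_Suc_eq power2_eq_square)
qed

(* The case L (Suc k) = 0 includes x (Suc k) = x k, where the quotient defining L is 0. *)
lemma local_curvature:
  "step_size (Suc k) * norm (g (x (Suc k)) - g (x k)) \<le> \<omega> * norm (x (Suc k) - x k)"
proof (cases "L (Suc k) = 0")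
  case True
  then have "norm (g (x (Suc k)) - g (x k)) = 0 \<or> norm (x (Suc k) - x k) = 0"
    by (simp add: L_Suc)
  then show ?thesis
    using omega by auto
next
  case False
  then have "0 < L (Suc k)" "0 < norm (x (Suc k) - x k)"
    using L_Suc_nonneg[of k] by (auto simp: L_Suc)
  moreover have "step_size (Suc k) \<le> \<omega> / L (Suc k)"
    using False by (simp add: step_size_Suc)
  ultimately show ?thesis
    by (simp add: L_Suc field_simps)
qed

sublocale adaptive_gradient_method f g x step_size \<theta> \<omega>
proof
  show "x (Suc k) = x k - step_size k *\<^sub>R g (x k)" for k
    by (simp add: x_step step_size_def)
qed (use convex grad theta0[THEN less_imp_le] omega_sq_le step_size_pos_theta_pos theta_Suc_eq step_growth
      local_curvature in auto)

lemma step_size_lower_bound: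
  assumes "0 < K"
    and lip: "\<And>k. norm (g (x (Suc k)) - g (x k)) \<le> K * norm (x (Suc k) - x k)"
  shows "min (step_size 0) (\<omega> / K) \<le> step_size k"
proof (induction k)
  case (Suc k)
  have "step_size k \<le> step_size k * growth_factor k"
    using growth_factor_ge_1[of k] step_size_pos_theta_pos[of k] by simp
  moreover have "\<omega> / K \<le> \<omega> / L (Suc k)" if "L (Suc k) \<noteq> 0"
  proof -
    have "0 < L (Suc k)" "0 < norm (x (Suc k) - x k)"
      using that L_Suc_nonneg[of k] by (auto simp: L_Suc)
    then have "L (Suc k) \<le> K"
      using lip[of k] by (simp add: L_Suc divide_le_eq)
    then show ?thesis
      using omega \<open>0 < L (Suc k)\<close> by (intro divide_left_mono) auto
  qed
  ultimately show ?case
    using Suc.IH by (auto simp: step_size_Suc)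
qed simp

lemma radius_exceeds_minimizer_energy:
  obtains z where "z \<in> argmin_set f" "sqrt (initial_energy z) + norm z < R"
proof -
  have "continuous_on UNIV f"
    using grad by (intro continuous_at_imp_continuous_on) (blast intro: has_derivative_continuous)
  then obtain z where z: "z \<in> argmin_set f" "infdist (x 0) (argmin_set f) = norm (x 0 - z)"
    using infdist_attains_inf[OF argmin_set_closed nonempty] by (metis dist_norm)
  have "initial_energy z = infdist (x 0) (argmin_set f) ^ 2
      + 2 * \<alpha> 0 ^ 2 * \<gamma> 0 ^ 2 * norm (g (x 0)) ^ 2
      + 2 * \<alpha> 0 * \<gamma> 0 * \<theta> 0 * (f (x 0) - (INF y. f y))"
    by (simp add: initial_energy_def step_size_def z(2) Inf_eq_argmin_value[OF z(1)] power_mult_distrib)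
  moreover have "norm z \<le> infdist (x 0) (argmin_set f) + norm (x 0)"
    using norm_triangle_sub[of z "x 0"] z(2) by (simp add: norm_minus_commute)
  ultimately show ?thesis
    using that z(1) R by fastforce
qed

lemma iterates_norm_bound:
  obtains B where "B < R" "\<And>k. norm (x k) \<le> B"
proof -
  obtain z where z: "z \<in> argmin_set f" "sqrt (initial_energy z) + norm z < R"
    by (rule radius_exceeds_minimizer_energy)
  have "norm (x k) \<le> sqrt (initial_energy z) + norm z" for k
  proof -
    have "norm (x k - z) \<le> sqrt (initial_energy z)"
      using dist_iterate_sq_le[OF z(1)] by (rule real_le_rsqrt)
    then show ?thesis
      using norm_triangle_sub[of "x k" z] by simp
  qed
  with z(2) that show ?thesis
    by blast
qed

lemma gradient_lipschitz_and_bound: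
  obtains K where "0 < K" "K-lipschitz_on (cball 0 (R + 1)) g" "\<And>y. y \<in> cball 0 R \<Longrightarrow> norm (g y) \<le> K"
proof -
  obtain K0 where K0: "K0-lipschitz_on (cball 0 (R + 1)) g"
    using locally_lipschitz_imp_lipschitz_on_compact[OF grad_lip compact_cball] by blast
  have "compact (g ` cball 0 R)"
    using grad_cont by (intro compact_continuous_image) (auto intro: continuous_on_subset)
  then obtain M where M: "\<And>y. y \<in> cball 0 R \<Longrightarrow> norm (g y) \<le> M"
    using compact_imp_bounded bounded_iff by (metis imageI)
  show ?thesis
  proof (rule that[of "max K0 (max M 1)"])
    show "(max K0 (max M 1))-lipschitz_on (cball 0 (R + 1)) g"
      using K0 by (rule lipschitz_on_le) simp
  qed (use M in \<open>force simp: le_max_iff_disj\<close>)+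
qed

lemma summable_gradient_norm_sq: "summable (\<lambda>k. (norm (g (x k)))\<^sup>2)"
proof -
  obtain B where B: "B < R" "\<And>k. norm (x k) \<le> B"
    using iterates_norm_bound by blast
  obtain K where K: "0 < K" "K-lipschitz_on (cball 0 (R + 1)) g"
    "\<And>y. y \<in> cball 0 R \<Longrightarrow> norm (g y) \<le> K"
    using gradient_lipschitz_and_bound by blast
  obtain z where z: "z \<in> argmin_set f" "sqrt (initial_energy z) + norm z < R"
    by (rule radius_exceeds_minimizer_energy)
  have in_cball: "x k \<in> cball 0 R" for k
    using B(1) B(2)[of k] by simp
  have "norm (g (x (Suc k)) - g (x k)) \<le> K * norm (x (Suc k) - x k)" for k
    using lipschitz_onD[OF K(2), of "x (Suc k)" "x k"] in_cball[of k] in_cball[of "Suc k"]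
    by (simp add: dist_norm)
  then have "min (step_size 0) (\<omega> / K) \<le> step_size k" for k
    using step_size_lower_bound K(1) by blast
  moreover have "0 < min (step_size 0) (\<omega> / K)"
    using step_size_pos_theta_pos[of 0] omega K(1) by simp
  moreover have "f (x k) - f z + 1 / (2 * K) * (norm (g (x k)))\<^sup>2 \<le> g (x k) \<bullet> (x k - z)" for k
  proof -
    have "0 \<le> sqrt (initial_energy z)"
      using initial_energy_nonneg[OF z(1)] by simp
    then have "norm z < R"
      using z(2) by linarith
    moreover have "norm (g (x k)) / K \<le> 1"
      using K(1) K(3) in_cball by simp
    ultimately have "cball z (norm (g (x k)) / K) \<subseteq> cball 0 (R + 1)"
      by (simp add: cball_subset_cball_iff dist_norm)
    then have "K-lipschitz_on (cball z (norm (g (x k)) / K)) g"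
      using lipschitz_on_subset[OF K(2)] by blast
    then show ?thesis
      using minimizer_gradient_inequality[OF convex grad z(1) K(1)] by simp
  qed
  moreover have "0 < 1 / (2 * K)"
    using K(1) by simp
  ultimately show ?thesis
    using summable_gradient_sq[OF z(1)] by blast
qed

end

theorem theorem4p3:
  fixes f :: "'a::euclidean_space \<Rightarrow> real"
    and g :: "'a \<Rightarrow> 'a"
    and x :: "nat \<Rightarrow> 'a"
    and \<alpha> \<theta> \<gamma> L :: "nat \<Rightarrow> real"
    and \<tau> \<omega> \<gamma>min \<gamma>max R :: real
  assumes convex: "convex_on UNIV f"
    and grad: "\<And>y. (f has_derivative (\<lambda>h. g y \<bullet> h)) (at y)"
    and grad_cont: "continuous_on UNIV g"
    and grad_lip: "locally_lipschitz g"
    and nonempty: "argmin_set f \<noteq> {}"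
    and alpha0: "\<alpha> 0 > 0"
    and theta0: "\<theta> 0 > 0"
    and tau: "\<tau> \<ge> 1"
    and omega: "0 < \<omega>" "\<omega> \<le> 1 / sqrt 2"
    and gamma_bounds: "0 < \<gamma>min" "\<And>k. \<gamma>min \<le> \<gamma> k" "\<And>k. \<gamma> k \<le> \<gamma>max"
    and x_step: "\<And>k. x (Suc k) = x k - (\<alpha> k * \<gamma> k) *\<^sub>R g (x k)"
    and L_def: "\<And>k. k \<ge> 1 \<Longrightarrow>
        L k = norm (g (x k) - g (x (k - 1))) / norm (x k - x (k - 1))"
    and alpha_def: "\<And>k. k \<ge> 1 \<Longrightarrow>
        \<alpha> k = (if L k = 0
                 then \<alpha> (k - 1) * \<gamma> (k - 1) / \<gamma> k * sqrt (2 * (1 - \<omega>\<^sup>2) + \<theta> (k - 1) / \<tau>)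
                 else min (\<alpha> (k - 1) * \<gamma> (k - 1) / \<gamma> k * sqrt (2 * (1 - \<omega>\<^sup>2) + \<theta> (k - 1) / \<tau>))
                          (\<omega> / (\<gamma> k * L k)))"
    and theta_def: "\<And>k. k \<ge> 1 \<Longrightarrow> \<theta> k = \<alpha> k * \<gamma> k / (\<alpha> (k - 1) * \<gamma> (k - 1))"
    and R: "R > sqrt (infdist (x 0) (argmin_set f) ^ 2
                 + 2 * \<alpha> 0 ^ 2 * \<gamma> 0 ^ 2 * norm (g (x 0)) ^ 2
                 + 2 * \<alpha> 0 * \<gamma> 0 * \<theta> 0 * (f (x 0) - (INF y. f y)))
             + infdist (x 0) (argmin_set f) + norm (x 0)"
  shows "(\<forall>k. x k \<in> ball 0 R) \<and> bounded (range x)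
      \<and> summable (\<lambda>k. norm (g (x k)) ^ 2) \<and> (\<lambda>k. norm (g (x k))) \<longlonglongrightarrow> 0
      \<and> (\<exists>xs \<in> argmin_set f. xs \<in> ball 0 R \<and> x \<longlonglongrightarrow> xs)"
proof -
  interpret adasga f g x \<alpha> \<theta> \<gamma> L \<tau> \<omega> \<gamma>min \<gamma>max R
    by (rule adasga.intro) (fact assms)+
  obtain B where B: "B < R" "\<And>k. norm (x k) \<le> B"
    using iterates_norm_bound by blast
  have summable: "summable (\<lambda>k. norm (g (x k)) ^ 2)"
    by (rule summable_gradient_norm_sq)
  then have "(\<lambda>k. sqrt ((norm (g (x k)))\<^sup>2)) \<longlonglongrightarrow> sqrt 0"
    by (intro tendsto_real_sqrt summable_LIMSEQ_zero)
  then have grad_lim: "(\<lambda>k. norm (g (x k))) \<longlonglongrightarrow> 0"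
    by simp
  then obtain p where p: "p \<in> argmin_set f" "x \<longlonglongrightarrow> p"
    using LIMSEQ_minimizer[OF nonempty grad_cont] by (auto simp: tendsto_norm_zero_iff)
  have "norm p \<le> B"
    using B(2) by (intro LIMSEQ_le_const2[OF tendsto_norm[OF p(2)]]) auto
  then show ?thesis
    using B summable grad_lim p bounded_iterates[OF nonempty] by (auto intro: le_less_trans)
qed

end
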